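(* Let $S$ be a finite set with $|S| = n \ge 3$ and let $(\mathcal{S}_1, \mathcal{S}_2)$ be an $S$-pair. Then $(\mathcal{S}_1,\mathcal{S}_2)$ is order consistent with respect to $S$ if and only if there exist sets $A_1 \in \mathcal{S}_1$ and $A_2 \in \mathcal{S}_2$ with $|A_1| = |A_2| = n-1$ and $A_1 \ne A_2$, and subsets $B_1, B_2 \subseteq S$ with $|B_1| = |B_2| = n-2$, such that for $i = 1,2$: $B_i \cap A_i = B_1 \cap B_2$, this common set is a subset of $A_1 \cap A_2$ of size $n-3$, and $\{b\} \in \mathcal{S}_i$ for every $b \in B_i$.
   Context: Let $S$ be a finite nonempty set and $\mathcal{S}_1, \mathcal{S}_2 \subseteq 2^S$. The pair $(\mathcal{S}_1,\mathcal{S}_2)$ is an $S$-pair if: (S1) for $i=1,2$, if $A,B \in \mathcal{S}_i$ with $B \subset A$ and $|A| = |B|+1$, then every $|B|$-element subset of $A$ lies in $\mathcal{S}_i$; (S2) for $i=1,2$, if $A,B \in \mathcal{S}_i$ with $|A|=|B|$ and $|A\cap B| = |A|-1$, then $A\cup B \in \mathcal{S}_i$; (S3) for $i=1,2$, not every singleton $\{s\}$, $s\in S$, lies in $\mathcal{S}_i$, and $S \notin \mathcal{S}_i$; (S4) for $k = 1,\dots,|S|-1$ and $x\in S$, if every $k$-element subset of $S - x$ lies in $\mathcal{S}_1$, then not every $(|S|-k)$-element subset of $S-x$ lies in $\mathcal{S}_2$. The pair $(\mathcal{S}_1,\mathcal{S}_2)$ is order consistent with respect to $S$ (where $|S|=n$)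 if for every ordering $s_1 s_2\cdots s_n$ of $S$ there exists $i\in\{1,\dots,n\}$ such that $\{s_1,\dots,s_i\} \in \mathcal{S}_1$ or $\{s_i,\dots,s_n\} \in \mathcal{S}_2$. *)

theory Defs
  imports Main
begin

definition S_pair :: "'a set \<Rightarrow> 'a set set \<Rightarrow> 'a set set \<Rightarrow> bool" where
  "S_pair S S1 S2 \<longleftrightarrow>
     S1 \<subseteq> Pow S \<and> S2 \<subseteq> Pow S \<and>
     (\<forall>F \<in> {S1, S2}.
        \<comment> \<open>(S1)\<close>
        (\<forall>A \<in> F. \<forall>B \<in> F. B \<subset> A \<and> card A = card B + 1 \<longrightarrow>
            (\<forall>C. C \<subseteq> A \<and> card C = card B \<longrightarrow> C \<in> F)) \<and>
        \<comment> \<open>(S2)\<close>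
        (\<forall>A \<in> F. \<forall>B \<in> F. card A = card B \<and> card (A \<inter> B) = card A - 1 \<longrightarrow>
            A \<union> B \<in> F) \<and>
        \<comment> \<open>(S3)\<close>
        (\<not> (\<forall>s \<in> S. {s} \<in> F)) \<and> S \<notin> F) \<and>
     \<comment> \<open>(S4)\<close>
     (\<forall>k x. 1 \<le> k \<and> k \<le> card S - 1 \<and> x \<in> S \<longrightarrow>
        (\<forall>C. C \<subseteq> S - {x} \<and> card C = k \<longrightarrow> C \<in> S1) \<longrightarrow>
        \<not> (\<forall>C. C \<subseteq> S - {x} \<and> card C = card S - k \<longrightarrow> C \<in> S2))"

text \<open>An ordering s_1 ... s_n of S is a distinct list xs with set xs = S.
  The prefix {s_1..s_i} is set (take i xs), the suffix {s_i..s_n} is set (drop (i-1) xs).\<close>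
definition order_consistent :: "'a set \<Rightarrow> 'a set set \<Rightarrow> 'a set set \<Rightarrow> bool" where
  "order_consistent S S1 S2 \<longleftrightarrow>
     (\<forall>xs. distinct xs \<and> set xs = S \<longrightarrow>
        (\<exists>i \<in> {1..length xs}. set (take i xs) \<in> S1 \<or> set (drop (i - 1) xs) \<in> S2))"

end

(*
  An ordering s_1 ... s_n of S fails to be order consistent exactly when all its cuts
  P = {s_1, ..., s_i}, 0 < i < n, are free: P is not in S1 and S - P is not in S2.  The exchange
  axioms (S1) and (S2) allow free cuts to be extended greedily, so order consistency
  forces S1 and S2 to contain complements S - {x1}, S - {x2} of singletons.

  If x1 = x2 = x, consistency at the consecutive cuts P and P + x says that for every
  partition P, D of S - {x} one of P, P + x lies in S1 or one of D, D + x lies in S2.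
  With (S4) this shows that neither family contains all (|S| - 2)-subsets of S - {x}.
  It follows that |S| = 5 and that each family contains exactly two of the singletons
  of S - {x}; a pair of elements mixed with respect to both families then violates
  the partition property.

  If x1 <> x2, the same cut argument puts all singletons of S - {x1, x2} into both
  families with at most one exception y, which yields B1 = S - {x2, y} and
  B2 = S - {x1, y}.  Conversely, such sets force every ordering to hit S1 or S2 in one
  of its first two or last two cuts.
*)

theory Submission
  imports Defs
begin

section \<open>S-families\<close>

definition S_family :: "'a set \<Rightarrow> 'a set set \<Rightarrow> bool" where
  "S_family S F \<longleftrightarrow> F \<subseteq> Pow S \<and>
     (\<forall>A \<in> F. \<forall>B \<in> F. B \<subset> A \<and> card A = card B + 1 \<longrightarrow>
        (\<forall>C. C \<subseteq> A \<and> card C = card B \<longrightarrow> C \<in> F)) \<and>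
     (\<forall>A \<in> F. \<forall>B \<in> F. card A = card B \<and> card (A \<inter> B) = card A - 1 \<longrightarrow> A \<union> B \<in> F) \<and>
     \<not> (\<forall>s \<in> S. {s} \<in> F) \<and> S \<notin> F"

definition all_card_in :: "'a set set \<Rightarrow> 'a set \<Rightarrow> nat \<Rightarrow> bool" where
  "all_card_in F V k \<longleftrightarrow> (\<forall>C. C \<subseteq> V \<and> card C = k \<longrightarrow> C \<in> F)"

lemma S_pair_iff:
  "S_pair S S1 S2 \<longleftrightarrow> S_family S S1 \<and> S_family S S2 \<and>
     (\<forall>k x. 1 \<le> k \<and> k \<le> card S - 1 \<and> x \<in> S \<longrightarrow>
        all_card_in S1 (S - {x}) k \<longrightarrow> \<not> all_card_in S2 (S - {x}) (card S - k))"
  unfolding S_pair_def S_family_def all_card_in_def by (simp only: ball_simps(7) ball_empty simp_thms conj_ac)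

lemma S_pair_families:
  assumes "S_pair S S1 S2"
  shows "S_family S S1" and "S_family S S2"
  using assms unfolding S_pair_iff by simp_all

lemma S_pair_S4:
  assumes "S_pair S S1 S2" and "1 \<le> k" and "k \<le> card S - 1" and "x \<in> S"
    and "all_card_in S1 (S - {x}) k"
  shows "\<not> all_card_in S2 (S - {x}) (card S - k)"
  using assms unfolding S_pair_iff by blast

lemma S_pair_swap:
  assumes "S_pair S S1 S2"
  shows "S_pair S S2 S1"
proof -
  have "\<not> all_card_in S1 (S - {x}) (card S - k)"
    if "1 \<le> k" "k \<le> card S - 1" "x \<in> S" "all_card_in S2 (S - {x}) k" for k x
  proof -
    have "1 \<le> card S - k" "card S - k \<le> card S - 1" "card S - (card S - k) = k"
      using that(1,2) by auto
    then show ?thesis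
      using S_pair_S4[OF assms, of "card S - k" x] that(3,4) by auto
  qed
  then show ?thesis
    using assms unfolding S_pair_iff by blast
qed

lemma all_card_in_card:
  assumes "finite V" and "V \<in> F"
  shows "all_card_in F V (card V)"
  using assms card_subset_eq unfolding all_card_in_def by blast

lemma card_le_2_if_covered_by_subsingletons:
  assumes "A \<subseteq> T \<union> U" and "\<forall>a\<in>T. \<forall>b\<in>T. a = b" and "\<forall>a\<in>U. \<forall>b\<in>U. a = b"
  shows "card A \<le> 2"
proof -
  have subsingleton: "finite X \<and> card X \<le> 1" if "\<forall>a\<in>X. \<forall>b\<in>X. a = b" for X :: "'a set"
  proof (cases "X = {}")
    case False
    then obtain a where "a \<in> X"
      by blast
    with that have "X = {a}"
      by blast
    then show ?thesis
      by simp
  qed simp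
  have "finite (T \<union> U)" and "card (T \<union> U) \<le> 2"
    using subsingleton[OF assms(2)] subsingleton[OF assms(3)] card_Un_le[of T U] by auto
  then show ?thesis
    using card_mono[OF _ assms(1)] by simp
qed

text \<open>The Johnson graph of the \<open>k\<close>-subsets of \<open>V\<close> is connected.\<close>

lemma exchange_closed_card_subsets:
  assumes "finite V" and "P0 \<subseteq> V" and "card P0 = k" and "Pr P0" and "P \<subseteq> V" and "card P = k"
    and exchange: "\<And>P p y. P \<subseteq> V \<Longrightarrow> card P = k \<Longrightarrow> Pr P \<Longrightarrow> p \<in> P \<Longrightarrow> y \<in> V - P
      \<Longrightarrow> Pr (insert y (P - {p}))"
  shows "Pr P"
  using assms(2-4)
proof (induction "card (P0 - P)" arbitrary: P0)
  case 0
  have "finite P0" "finite P"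
    using 0 assms(1,5) finite_subset by blast+
  then have "P0 = P"
    using 0 assms(6) card_subset_eq by (metis Diff_eq_empty_iff card_0_eq finite_Diff)
  then show ?case
    using "0.prems"(3) by simp
next
  case (Suc t)
  have "finite P0" "finite P"
    using Suc.prems(1) assms(1,5) finite_subset by blast+
  obtain p where p: "p \<in> P0" "p \<notin> P"
    using Suc.hyps(2) by (metis Diff_eq_empty_iff card.empty nat.distinct(1) subsetI)
  obtain y where y: "y \<in> P" "y \<notin> P0"
    using \<open>finite P0\<close> Suc.prems(2) assms(6) card_subset_eq p by (metis subsetI)
  have "0 < card P0"
    using p(1) \<open>finite P0\<close> card_gt_0_iff by blast
  let ?P1 = "insert y (P0 - {p})"
  have "?P1 \<subseteq> V" and "card ?P1 = k" and "Pr ?P1"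
    using Suc.prems y p assms(5) \<open>finite P0\<close> \<open>0 < card P0\<close> exchange[of P0 p y]
    by (auto simp: card_Diff_singleton)
  moreover have "card (?P1 - P) = t"
    using Suc.hyps(2) p y \<open>finite P0\<close> by (simp add: insert_Diff_if Diff_insert2[symmetric] card_Diff_singleton)
  ultimately show ?case
    using Suc.hyps(1) by blast
qed

context
  fixes S :: "'a set" and F :: "'a set set"
  assumes family: "S_family S F" and finite_S: "finite S"
begin

lemma family_subset: "A \<in> F \<Longrightarrow> A \<subseteq> S"
  using family unfolding S_family_def by (elim conjE) blast

lemma S_notin_family: "S \<notin> F"
  using family unfolding S_family_def by (elim conjE)

lemma not_all_singletons_in_family: "\<exists>s\<in>S. {s} \<notin> F"
  using family unfolding S_family_def by (elim conjE) blast

lemma family_down_closed: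
  assumes "A \<in> F" and "B \<in> F" and "B \<subset> A" and "card A = card B + 1"
    and "C \<subseteq> A" and "card C = card B"
  shows "C \<in> F"
proof -
  have "\<forall>A \<in> F. \<forall>B \<in> F. B \<subset> A \<and> card A = card B + 1 \<longrightarrow>
      (\<forall>C. C \<subseteq> A \<and> card C = card B \<longrightarrow> C \<in> F)"
    using family unfolding S_family_def by (elim conjE)
  then show ?thesis
    using assms by blast
qed

lemma family_union_closed:
  assumes "A \<in> F" and "B \<in> F" and "card A = card B" and "card (A \<inter> B) = card A - 1"
  shows "A \<union> B \<in> F"
proof -
  have "\<forall>A \<in> F. \<forall>B \<in> F. card A = card B \<and> card (A \<inter> B) = card A - 1 \<longrightarrow> A \<union> B \<in> F"
    using family unfolding S_family_def by (elim conjE)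
  then show ?thesis
    using assms by blast
qed

lemma family_exchange:
  assumes "A \<in> F" and "a \<in> A" and "A - {a} \<in> F" and "b \<in> A"
  shows "A - {b} \<in> F"
proof -
  have "finite A"
    using family_subset[OF assms(1)] finite_S finite_subset by blast
  then have "card A = card (A - {a}) + 1" and "card (A - {b}) = card (A - {a})"
    using assms(2,4) card.remove[of A a] by (simp_all add: card_Diff_singleton)
  moreover have "A - {a} \<subset> A"
    using assms(2) by blast
  moreover have "A - {b} \<subseteq> A"
    by blast
  ultimately show ?thesis
    using family_down_closed[OF assms(1,3)] by blast
qed

lemma family_insert_insert:
  assumes "insert a Q \<in> F" and "insert b Q \<in> F" and "a \<notin> Q" and "b \<notin> Q"
  shows "insert a (insert b Q) \<in> F"
proof (cases "a = b")
  case False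
  have "finite Q"
    using finite_subset[OF family_subset[OF assms(1)] finite_S] by simp
  moreover have "insert a Q \<inter> insert b Q = Q"
    using assms(3,4) False by blast
  ultimately have "card (insert a Q) = card (insert b Q)"
    and "card (insert a Q \<inter> insert b Q) = card (insert a Q) - 1"
    using assms(3,4) by simp_all
  then have "insert a Q \<union> insert b Q \<in> F"
    by (rule family_union_closed[OF assms(1,2)])
  then show ?thesis
    by (simp add: insert_commute)
qed (use assms(1) in simp)

lemma complement_singleton_unique:
  assumes "a \<in> S" and "b \<in> S" and "S - {a} \<in> F" and "S - {b} \<in> F"
  shows "a = b"
proof (rule ccontr)
  assume "a \<noteq> b"
  then have "insert a (S - {a, b}) = S - {b}" and "insert b (S - {a, b}) = S - {a}"
    and "insert a (insert b (S - {a, b})) = S"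
    using assms(1,2) by auto
  then show False
    using family_insert_insert[of a "S - {a, b}" b] assms(3,4) S_notin_family by simp
qed

lemma family_union_of_inserts:
  assumes "finite E" and "E \<noteq> {}" and "E \<inter> P = {}" and "\<forall>e\<in>E. insert e P \<in> F"
  shows "P \<union> E \<in> F"
  using assms
proof (induction E arbitrary: P rule: finite_ne_induct)
  case (singleton e)
  then show ?case
    by simp
next
  case (insert e E)
  have "insert e' (insert e P) \<in> F" if "e' \<in> E" for e'
  proof (rule family_insert_insert)
    show "insert e' P \<in> F" "insert e P \<in> F" "e' \<notin> P" "e \<notin> P"
      using insert.prems that by auto
  qed
  moreover have "E \<inter> insert e P = {}"
    using insert.prems(1) insert.hyps(3) by blast
  ultimately have "insert e P \<union> E \<in> F"
    using insert.IH by blast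
  then show ?case
    by simp
qed

lemma family_lift:
  assumes "Z \<inter> V = {}" and "1 \<le> j" and "j \<le> card Q" and "Q \<subseteq> V"
    and "\<forall>C. C \<subseteq> V \<and> card C = j \<longrightarrow> Z \<union> C \<in> F"
  shows "Z \<union> Q \<in> F"
proof -
  have "finite Q"
    using assms(2,3) card.infinite by (metis not_one_le_zero order_trans)
  have "j - 1 \<le> card Q"
    using assms(3) by simp
  then obtain Q0 where Q0: "Q0 \<subseteq> Q" "card Q0 = j - 1" "finite Q0"
    by (rule obtain_subset_with_card_n)
  have "card (Q - Q0) \<noteq> 0"
    using card_Diff_subset[OF Q0(3) Q0(1)] Q0(2) assms(2,3) by simp
  then have nonempty: "Q - Q0 \<noteq> {}"
    by (metis card.empty)
  have inserts: "\<forall>e\<in>Q - Q0. insert e (Z \<union> Q0) \<in> F"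
  proof
    fix e assume "e \<in> Q - Q0"
    then have "insert e Q0 \<subseteq> V" and "card (insert e Q0) = j"
      using Q0 assms(2,4) by auto
    then have "Z \<union> insert e Q0 \<in> F"
      using assms(5) by blast
    then show "insert e (Z \<union> Q0) \<in> F"
      by simp
  qed
  have "(Q - Q0) \<inter> (Z \<union> Q0) = {}"
    using assms(1,4) by blast
  then have "(Z \<union> Q0) \<union> (Q - Q0) \<in> F"
    using family_union_of_inserts[OF _ nonempty _ inserts] \<open>finite Q\<close> by simp
  moreover have "(Z \<union> Q0) \<union> (Q - Q0) = Z \<union> Q"
    using Q0(1) by blast
  ultimately show ?thesis
    by simp
qed

lemma all_card_in_down:
  assumes "V \<subseteq> S" and "all_card_in F V (Suc k)" and "C \<subseteq> V" and "card C = k" and "C \<in> F"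
  shows "all_card_in F V k"
  unfolding all_card_in_def
proof (intro allI impI)
  fix C' assume C': "C' \<subseteq> V \<and> card C' = k"
  have "finite V"
    using finite_subset[OF assms(1) finite_S] .
  show "C' \<in> F"
  proof (rule exchange_closed_card_subsets[of V C k "\<lambda>P. P \<in> F"])
    fix P p y assume P: "P \<subseteq> V" "card P = k" "P \<in> F" "p \<in> P" "y \<in> V - P"
    have "finite P"
      using finite_subset[OF P(1) \<open>finite V\<close>] .
    then have "insert y P \<in> F"
      using assms(2) P(1,2,5) unfolding all_card_in_def by simp
    moreover have "insert y P - {y} \<in> F"
      using P(3,5) by simp
    ultimately have "insert y P - {p} \<in> F"
      using family_exchange[of "insert y P" y p] P(4) by simp
    moreover have "insert y P - {p} = insert y (P - {p})"
      using P(4,5) by blast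
    ultimately show "insert y (P - {p}) \<in> F"
      by simp
  qed (use C' \<open>finite V\<close> assms(3-5) in simp_all)
qed

lemma insert_notin_family_below_full:
  assumes "x \<in> S" and full: "all_card_in F (S - {x}) (Suc k)" and "1 \<le> k"
    and "Suc k \<le> card (S - {x})" and "P \<subseteq> S - {x}" and "card P = k"
  shows "insert x P \<notin> F"
proof
  assume "insert x P \<in> F"
  let ?V = "S - {x}"
  have "finite ?V"
    using finite_S by simp
  have "insert x Q \<in> F" if "Q \<subseteq> ?V" and "card Q = k" for Q
  proof (rule exchange_closed_card_subsets[of ?V P k "\<lambda>P. insert x P \<in> F"])
    fix P p y assume P: "P \<subseteq> ?V" "card P = k" "insert x P \<in> F" "p \<in> P" "y \<in> ?V - P"
    have "finite P"
      using finite_subset[OF P(1) \<open>finite ?V\<close>] .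
    then have "insert y P \<in> F"
      using full P(1,2,5) unfolding all_card_in_def by simp
    then have "insert x (insert y P) \<in> F"
      using family_insert_insert[OF P(3)] P(1,5) by blast
    moreover have "insert x (insert y P) - {y} = insert x P"
      using P(5) by blast
    ultimately have "insert x (insert y P) - {p} \<in> F"
      using family_exchange[of "insert x (insert y P)" y p] P(3,4) by simp
    moreover have "insert x (insert y P) - {p} = insert x (insert y (P - {p}))"
      using P(1,4,5) by blast
    ultimately show "insert x (insert y (P - {p})) \<in> F"
      by simp
  qed (use assms(5,6) \<open>insert x P \<in> F\<close> \<open>finite ?V\<close> that in simp_all)
  then have link: "\<forall>Q. Q \<subseteq> ?V \<and> card Q = k \<longrightarrow> {x} \<union> Q \<in> F"
    by simp
  have "card ?V \<noteq> 0"
    using assms(4) by simp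
  then have "?V \<noteq> {}"
    by (metis card.empty)
  then obtain v where v: "v \<in> ?V"
    by blast
  have "card (?V - {v}) = card ?V - 1"
    using v by simp
  then have "{x} \<union> (?V - {v}) \<in> F"
    using family_lift[OF _ assms(3) _ _ link] assms(4) by simp
  moreover have "{x} \<union> (?V - {v}) = S - {v}"
    using assms(1) v by blast
  moreover have "{} \<union> ?V \<in> F"
    using family_lift[of "{}" ?V "Suc k" ?V] full assms(4) unfolding all_card_in_def by simp
  ultimately have "v = x"
    using complement_singleton_unique[of v x] assms(1) v by simp
  then show False
    using v by simp
qed

lemma all_card_in_if_covered:
  assumes "2 \<le> d" and cover: "\<forall>Q. Q \<subseteq> S - {x} \<and> card Q = d \<longrightarrow> Q \<in> F \<or> insert x Q \<in> F"
  shows "all_card_in F (S - {x}) (Suc d)"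
  unfolding all_card_in_def
proof (intro allI impI)
  fix W assume W: "W \<subseteq> S - {x} \<and> card W = Suc d"
  then have "finite W" and "x \<notin> W"
    using card.infinite by force+
  show "W \<in> F"
  proof (rule ccontr)
    assume "W \<notin> F"
    let ?T = "{a \<in> W. W - {a} \<in> F}" and ?U = "{a \<in> W. insert x (W - {a}) \<in> F}"
    have "W \<subseteq> ?T \<union> ?U"
    proof
      fix a assume "a \<in> W"
      then have "W - {a} \<subseteq> S - {x} \<and> card (W - {a}) = d"
        using W \<open>finite W\<close> by auto
      then show "a \<in> ?T \<union> ?U"
        using cover \<open>a \<in> W\<close> by blast
    qed
    moreover have "\<forall>a\<in>?T. \<forall>b\<in>?T. a = b"
    proof (intro ballI, rule ccontr)
      fix a b assume "a \<in> ?T" "b \<in> ?T" "a \<noteq> b"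
      then have "insert a (W - {a, b}) = W - {b}" and "insert b (W - {a, b}) = W - {a}"
        by auto
      then have "insert a (insert b (W - {a, b})) \<in> F"
        using family_insert_insert[of a "W - {a, b}" b] \<open>a \<in> ?T\<close> \<open>b \<in> ?T\<close> by simp
      moreover have "insert a (insert b (W - {a, b})) = W"
        using \<open>a \<in> ?T\<close> \<open>b \<in> ?T\<close> by blast
      ultimately show False
        using \<open>W \<notin> F\<close> by simp
    qed
    moreover have "\<forall>a\<in>?U. \<forall>b\<in>?U. a = b"
    proof (intro ballI, rule ccontr)
      fix a b assume "a \<in> ?U" "b \<in> ?U" "a \<noteq> b"
      let ?Q = "insert x (W - {a, b})"
      have "insert a ?Q = insert x (W - {b})" and "insert b ?Q = insert x (W - {a})"
        using \<open>a \<in> ?U\<close> \<open>b \<in> ?U\<close> \<open>a \<noteq> b\<close> by auto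
      then have "insert a (insert b ?Q) \<in> F"
        using family_insert_insert[of a ?Q b] \<open>a \<in> ?U\<close> \<open>b \<in> ?U\<close> \<open>x \<notin> W\<close> by auto
      moreover have "insert a (insert b ?Q) = insert x W"
        using \<open>a \<in> ?U\<close> \<open>b \<in> ?U\<close> by blast
      moreover have "insert x W - {a} = insert x (W - {a})"
        using \<open>a \<in> ?U\<close> \<open>x \<notin> W\<close> by blast
      ultimately have "insert x W - {x} \<in> F"
        using family_exchange[of "insert x W" a x] \<open>a \<in> ?U\<close> by simp
      then show False
        using \<open>W \<notin> F\<close> \<open>x \<notin> W\<close> by simp
    qed
    ultimately have "card W \<le> 2"
      by (rule card_le_2_if_covered_by_subsingletons)
    then show False
      using W assms(1) by simp
  qed
qed

end

section \<open>Orderings and free cuts\<close>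

text \<open>As \<open>S \<notin> F1\<close> and \<open>S \<notin> F2\<close>, an ordering violates order consistency iff each of its
  nonempty proper prefixes is a free cut.\<close>

definition free_cut :: "'a set \<Rightarrow> 'a set set \<Rightarrow> 'a set set \<Rightarrow> 'a set \<Rightarrow> bool" where
  "free_cut S F1 F2 P \<longleftrightarrow> P \<notin> F1 \<and> S - P \<notin> F2"

definition free_chain :: "'a set \<Rightarrow> 'a set set \<Rightarrow> 'a set set \<Rightarrow> 'a set \<Rightarrow> 'a list \<Rightarrow> bool" where
  "free_chain S F1 F2 P ys \<longleftrightarrow> distinct ys \<and> set ys = S - P \<and>
     (\<forall>j < length ys. free_cut S F1 F2 (P \<union> set (take j ys)))"

lemma set_drop_distinct:
  assumes "distinct xs"
  shows "set (drop k xs) = set xs - set (take k xs)"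
proof -
  have "set (take k xs) \<inter> set (drop k xs) = {}"
    using set_take_disj_set_drop_if_distinct[OF assms] by simp
  moreover have "set xs = set (take k xs) \<union> set (drop k xs)"
    by (metis append_take_drop_id set_append)
  ultimately show ?thesis
    by blast
qed

lemma order_consistent_swap:
  assumes "order_consistent S F1 F2"
  shows "order_consistent S F2 F1"
  unfolding order_consistent_def
proof (intro allI impI)
  fix xs :: "'a list" assume xs: "distinct xs \<and> set xs = S"
  then obtain i where i: "i \<in> {1..length xs}"
    and "set (take i (rev xs)) \<in> F1 \<or> set (drop (i - 1) (rev xs)) \<in> F2"
    using assms unfolding order_consistent_def by (metis distinct_rev length_rev set_rev)
  moreover have "set (take i (rev xs)) = set (drop (length xs + 1 - i - 1) xs)"
    and "set (drop (i - 1) (rev xs)) = set (take (length xs + 1 - i) xs)"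
    using i by (simp_all add: take_rev drop_rev)
  ultimately show "\<exists>j\<in>{1..length xs}. set (take j xs) \<in> F2 \<or> set (drop (j - 1) xs) \<in> F1"
    by (intro bexI[of _ "length xs + 1 - i"]) auto
qed

lemma not_order_consistent_if_free_prefixes:
  assumes "distinct xs" and "set xs = S" and "S \<notin> F1" and "S \<notin> F2"
    and free: "\<And>k. 1 \<le> k \<Longrightarrow> k < length xs \<Longrightarrow> free_cut S F1 F2 (set (take k xs))"
  shows "\<not> order_consistent S F1 F2"
proof -
  have "set (take i xs) \<notin> F1 \<and> set (drop (i - 1) xs) \<notin> F2" if "i \<in> {1..length xs}" for i
  proof
    show "set (take i xs) \<notin> F1"
      using free[of i] assms(2,3) that unfolding free_cut_def by (cases "i < length xs") auto
    have "set (drop (i - 1) xs) = S - set (take (i - 1) xs)"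
      using set_drop_distinct[OF assms(1)] assms(2) by simp
    moreover have "free_cut S F1 F2 (set (take (i - 1) xs))" if "i \<noteq> 1"
      using \<open>i \<in> {1..length xs}\<close> that by (intro free) auto
    ultimately show "set (drop (i - 1) xs) \<notin> F2"
      using assms(4) unfolding free_cut_def by (cases "i = 1") auto
  qed
  then show ?thesis
    using assms(1,2) unfolding order_consistent_def by blast
qed

lemma free_chain_Cons:
  assumes "free_chain S F1 F2 (insert e P) ys" and "free_cut S F1 F2 P" and "e \<in> S" and "e \<notin> P"
  shows "free_chain S F1 F2 P (e # ys)"
  unfolding free_chain_def
proof (intro conjI allI impI)
  show "distinct (e # ys)" and "set (e # ys) = S - P"
    using assms(1,3,4) unfolding free_chain_def by auto
  fix j assume "j < length (e # ys)"
  then show "free_cut S F1 F2 (P \<union> set (take j (e # ys)))"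
    using assms(1,2) unfolding free_chain_def by (cases j) auto
qed

lemma not_order_consistent_if_free_chains:
  assumes "Q \<subseteq> S" and "S \<notin> F1" and "S \<notin> F2"
    and up: "free_chain S F1 F2 Q ys" and down: "free_chain S F2 F1 (S - Q) zs"
  shows "\<not> order_consistent S F1 F2"
proof (rule not_order_consistent_if_free_prefixes[of "rev zs @ ys"])
  have zs: "distinct zs" "set zs = Q" "\<forall>j<length zs. free_cut S F2 F1 ((S - Q) \<union> set (take j zs))"
    using down assms(1) unfolding free_chain_def by auto
  have ys: "distinct ys" "set ys = S - Q" "\<forall>j<length ys. free_cut S F1 F2 (Q \<union> set (take j ys))"
    using up unfolding free_chain_def by auto
  show "distinct (rev zs @ ys)" and "set (rev zs @ ys) = S"
    using zs ys assms(1) by auto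
  fix k assume k: "1 \<le> k" "k < length (rev zs @ ys)"
  show "free_cut S F1 F2 (set (take k (rev zs @ ys)))"
  proof (cases "k \<le> length zs")
    case True
    let ?j = "length zs - k"
    have "set (take k (rev zs @ ys)) = set (drop ?j zs)"
      using True by (simp add: take_rev)
    also have "\<dots> = Q - set (take ?j zs)"
      using set_drop_distinct[OF zs(1)] zs(2) by simp
    finally have "set (take k (rev zs @ ys)) = S - ((S - Q) \<union> set (take ?j zs))"
      using assms(1) zs(2) set_take_subset[of ?j zs] by blast
    moreover have "S - set (take k (rev zs @ ys)) = (S - Q) \<union> set (take ?j zs)"
      using calculation assms(1) zs(2) set_take_subset[of ?j zs] by blast
    ultimately show ?thesis
      using zs(3) True k(1) unfolding free_cut_def by simp
  next
    case False
    then have "set (take k (rev zs @ ys)) = Q \<union> set (take (k - length zs) ys)"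
      using zs(2) by simp
    then show ?thesis
      using ys(3) False k(2) by simp
  qed
qed (use assms(2,3) in simp_all)

context
  fixes S :: "'a set" and F1 F2 :: "'a set set"
  assumes family1: "S_family S F1" and family2: "S_family S F2" and finite_S: "finite S"
begin

text \<open>At most one extension of \<open>P\<close> can be blocked by \<open>F2\<close>, since two such would
  merge into \<open>S - P \<in> F2\<close>; if all the others were blocked by \<open>F1\<close>, their union would be
  \<open>S\<close> or a complement of a singleton outside \<open>P\<close>.\<close>

lemma free_cut_extend:
  assumes "P \<subseteq> S" and free: "free_cut S F1 F2 P" and no_co1: "\<forall>h\<in>S - P. S - {h} \<notin> F1"
    and "2 \<le> card (S - P)"
  shows "\<exists>e\<in>S - P. free_cut S F1 F2 (insert e P)"
proof (rule ccontr)
  assume "\<not> ?thesis"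
  then have blocked: "insert e P \<in> F1 \<or> S - insert e P \<in> F2" if "e \<in> S - P" for e
    using that unfolding free_cut_def by blast
  define E where "E = {e \<in> S - P. insert e P \<notin> F1}"
  have E_subsingleton: "\<forall>a\<in>E. \<forall>b\<in>E. a = b"
  proof (intro ballI, rule ccontr)
    fix a b assume "a \<in> E" "b \<in> E" "a \<noteq> b"
    let ?Q = "S - P - {a, b}"
    have "insert a ?Q = S - insert b P" and "insert b ?Q = S - insert a P"
      and "insert a (insert b ?Q) = S - P"
      using \<open>a \<in> E\<close> \<open>b \<in> E\<close> \<open>a \<noteq> b\<close> unfolding E_def by auto
    moreover have "S - insert a P \<in> F2" and "S - insert b P \<in> F2"
      using blocked \<open>a \<in> E\<close> \<open>b \<in> E\<close> unfolding E_def by auto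
    ultimately have "S - P \<in> F2"
      using family_insert_insert[OF family2 finite_S, of a ?Q b] by simp
    then show False
      using free unfolding free_cut_def by simp
  qed
  have "E \<subseteq> S - P" and "finite E"
    using finite_S unfolding E_def by auto
  have "card E \<le> 1"
    using card_le_Suc0_iff_eq[OF \<open>finite E\<close>] E_subsingleton by simp
  moreover have "card (S - P - E) = card (S - P) - card E"
    using card_Diff_subset[OF \<open>finite E\<close> \<open>E \<subseteq> S - P\<close>] .
  ultimately have "card (S - P - E) \<noteq> 0"
    using assms(4) by linarith
  then have "S - P - E \<noteq> {}"
    by (metis card.empty)
  moreover have "\<forall>e\<in>S - P - E. insert e P \<in> F1"
    unfolding E_def by blast
  moreover have "finite (S - P - E)" and "(S - P - E) \<inter> P = {}"
    using finite_S by auto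
  ultimately have "P \<union> (S - P - E) \<in> F1"
    using family_union_of_inserts[OF family1 finite_S] by blast
  moreover have "P \<union> (S - P - E) = S - E"
    using assms(1) \<open>E \<subseteq> S - P\<close> by blast
  ultimately have "S - E \<in> F1"
    by simp
  show False
  proof (cases "E = {}")
    case True
    then show False
      using \<open>S - E \<in> F1\<close> S_notin_family[OF family1 finite_S] by simp
  next
    case False
    then obtain h where "E = {h}"
      using E_subsingleton by blast
    then show False
      using \<open>S - E \<in> F1\<close> no_co1 \<open>E \<subseteq> S - P\<close> by auto
  qed
qed

lemma free_chain_exists:
  assumes "P \<subseteq> S" and "free_cut S F1 F2 P" and "\<forall>h\<in>S - P. S - {h} \<notin> F1"
  shows "\<exists>ys. free_chain S F1 F2 P ys"
  using assms
proof (induction "card (S - P)" arbitrary: P rule: less_induct)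
  case less
  show ?case
  proof (cases "2 \<le> card (S - P)")
    case True
    then obtain e where e: "e \<in> S - P" "free_cut S F1 F2 (insert e P)"
      using free_cut_extend[OF less.prems True] by blast
    have "card (S - P - {e}) < card (S - P)"
      using card_Diff1_less[of "S - P" e] finite_S e(1) by blast
    moreover have "S - P - {e} = S - insert e P"
      by blast
    ultimately have "card (S - insert e P) < card (S - P)"
      by simp
    moreover have "insert e P \<subseteq> S" and "\<forall>h\<in>S - insert e P. S - {h} \<notin> F1"
      using less.prems(1,3) e(1) by auto
    ultimately obtain ys where "free_chain S F1 F2 (insert e P) ys"
      using less.hyps[of "insert e P"] e(2) by blast
    then have "free_chain S F1 F2 P (e # ys)"
      by (rule free_chain_Cons) (use less.prems(2) e(1) in auto)
    then show ?thesis
      by blast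
  next
    case False
    show ?thesis
    proof (cases "S - P = {}")
      case True
      then have "free_chain S F1 F2 P []"
        unfolding free_chain_def by simp
      then show ?thesis
        by blast
    next
      case nonempty: False
      then obtain h where "h \<in> S - P"
        by blast
      moreover have "\<forall>a\<in>S - P. \<forall>b\<in>S - P. a = b"
        using card_le_Suc0_iff_eq[of "S - P"] finite_S False by simp
      ultimately have "S - P = {h}"
        by blast
      then have "free_chain S F1 F2 P [h]"
        using less.prems(2) unfolding free_chain_def by simp
      then show ?thesis
        by blast
    qed
  qed
qed

end

context
  fixes S :: "'a set" and F1 F2 :: "'a set set"
  assumes family1: "S_family S F1" and family2: "S_family S F2" and finite_S: "finite S"
    and consistent: "order_consistent S F1 F2"
begin

lemma order_consistent_cut:
  assumes "Q \<subseteq> S" and "\<forall>h\<in>S - Q. S - {h} \<notin> F1" and "\<forall>h\<in>Q. S - {h} \<notin> F2"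
  shows "Q \<in> F1 \<or> S - Q \<in> F2"
proof (rule ccontr)
  assume "\<not> ?thesis"
  moreover have "S - (S - Q) = Q"
    using assms(1) by blast
  ultimately have "free_cut S F1 F2 Q" and "free_cut S F2 F1 (S - Q)"
    unfolding free_cut_def by simp_all
  obtain ys where "free_chain S F1 F2 Q ys"
    using free_chain_exists[OF family1 family2 finite_S assms(1) \<open>free_cut S F1 F2 Q\<close> assms(2)] by blast
  moreover obtain zs where "free_chain S F2 F1 (S - Q) zs"
    using free_chain_exists[OF family2 family1 finite_S _ \<open>free_cut S F2 F1 (S - Q)\<close>]
      assms(3) \<open>S - (S - Q) = Q\<close> by auto
  ultimately show False
    using not_order_consistent_if_free_chains[OF assms(1) S_notin_family[OF family1 finite_S]
      S_notin_family[OF family2 finite_S]] consistent by blast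
qed

lemma order_consistent_complement_singleton:
  assumes "2 \<le> card S"
  shows "\<exists>x\<in>S. S - {x} \<in> F1"
proof (rule ccontr)
  assume none: "\<not> ?thesis"
  have singleton: "{s} \<in> F1" if "s \<in> S" and "S - {s} \<notin> F2" for s
    using order_consistent_cut[of "{s}"] none that by auto
  show False
  proof (cases "\<exists>x\<in>S. S - {x} \<in> F2")
    case False
    then show False
      using singleton not_all_singletons_in_family[OF family1 finite_S] by blast
  next
    case True
    then obtain x where x: "x \<in> S" "S - {x} \<in> F2"
      by blast
    have "card (S - {x}) \<noteq> 0"
      using assms x(1) by simp
    then have "S - {x} \<noteq> {}"
      by (metis card.empty)
    moreover have "\<forall>e\<in>S - {x}. insert e {} \<in> F1"
      using singleton complement_singleton_unique[OF family2 finite_S] x by blast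
    ultimately have "{} \<union> (S - {x}) \<in> F1"
      by (intro family_union_of_inserts[OF family1 finite_S]) (use finite_S in auto)
    then show False
      using none x(1) by simp
  qed
qed

lemma order_consistent_step:
  assumes "x \<in> S" and "S - {x} \<in> F1" and "S - {x} \<in> F2"
    and "P \<union> D = S - {x}" and "P \<inter> D = {}"
  shows "P \<in> F1 \<or> insert x P \<in> F1 \<or> D \<in> F2 \<or> insert x D \<in> F2"
proof (rule ccontr)
  assume "\<not> ?thesis"
  moreover have "S - P = insert x D" and "S - insert x P = D" and "S - (S - P) = P"
    using assms(1,4,5) by auto
  ultimately have free: "free_cut S F1 F2 P" "free_cut S F1 F2 (insert x P)" "free_cut S F2 F1 (S - P)"
    unfolding free_cut_def by simp_all
  have "P \<subseteq> S" and "x \<notin> P"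
    using assms(4) by auto
  have "\<forall>h\<in>S - insert x P. S - {h} \<notin> F1"
    using complement_singleton_unique[OF family1 finite_S _ assms(1) _ assms(2)] by blast
  then obtain ys where "free_chain S F1 F2 (insert x P) ys"
    using free_chain_exists[OF family1 family2 finite_S _ free(2)] \<open>P \<subseteq> S\<close> assms(1) by blast
  then have up: "free_chain S F1 F2 P (x # ys)"
    by (rule free_chain_Cons) (use free(1) assms(1) \<open>x \<notin> P\<close> in auto)
  have "\<forall>h\<in>S - (S - P). S - {h} \<notin> F2"
    using complement_singleton_unique[OF family2 finite_S _ assms(1) _ assms(3)]
      \<open>S - (S - P) = P\<close> \<open>x \<notin> P\<close> by auto
  then obtain zs where down: "free_chain S F2 F1 (S - P) zs"
    using free_chain_exists[OF family2 family1 finite_S _ free(3)] by blast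
  show False
    using not_order_consistent_if_free_chains[OF \<open>P \<subseteq> S\<close> _ _ up down] consistent
      S_notin_family[OF family1 finite_S] S_notin_family[OF family2 finite_S] by blast
qed

lemma order_consistent_cut_between:
  assumes "x1 \<in> S" and "x2 \<in> S" and "S - {x1} \<in> F1" and "S - {x2} \<in> F2"
    and "Q \<subseteq> S" and "x1 \<in> Q" and "x2 \<notin> Q"
  shows "Q \<in> F1 \<or> S - Q \<in> F2"
proof (rule order_consistent_cut[OF assms(5)])
  show "\<forall>h\<in>S - Q. S - {h} \<notin> F1"
    using complement_singleton_unique[OF family1 finite_S _ assms(1) _ assms(3)] assms(6) by blast
  show "\<forall>h\<in>Q. S - {h} \<notin> F2"
    using complement_singleton_unique[OF family2 finite_S _ assms(2) _ assms(4)] assms(5,7) by blast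
qed

end

section \<open>Distinct complement singletons\<close>

definition consistency_certificate :: "'a set \<Rightarrow> 'a set set \<Rightarrow> 'a set set \<Rightarrow> bool" where
  "consistency_certificate S S1 S2 \<longleftrightarrow>
    (\<exists>A1 A2 B1 B2. A1 \<in> S1 \<and> A2 \<in> S2 \<and>
       card A1 = card S - 1 \<and> card A2 = card S - 1 \<and> A1 \<noteq> A2 \<and>
       B1 \<subseteq> S \<and> B2 \<subseteq> S \<and> card B1 = card S - 2 \<and> card B2 = card S - 2 \<and>
       B1 \<inter> A1 = B1 \<inter> B2 \<and> B2 \<inter> A2 = B1 \<inter> B2 \<and>
       B1 \<inter> B2 \<subseteq> A1 \<inter> A2 \<and> card (B1 \<inter> B2) = card S - 3 \<and>
       (\<forall>b \<in> B1. {b} \<in> S1) \<and> (\<forall>b \<in> B2. {b} \<in> S2))"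

locale separated_complement_singletons =
  fixes S :: "'a set" and F1 F2 :: "'a set set" and x1 x2 :: 'a
  assumes family1: "S_family S F1" and family2: "S_family S F2" and finite_S: "finite S"
    and x1: "x1 \<in> S" and x2: "x2 \<in> S" and x1_neq_x2: "x1 \<noteq> x2"
    and complement1: "S - {x1} \<in> F1" and complement2: "S - {x2} \<in> F2"
    and cut: "\<And>Q. Q \<subseteq> S \<Longrightarrow> x1 \<in> Q \<Longrightarrow> x2 \<notin> Q \<Longrightarrow> Q \<in> F1 \<or> S - Q \<in> F2"
begin

sublocale swapped: separated_complement_singletons S F2 F1 x2 x1
proof
  fix Q assume "Q \<subseteq> S" "x2 \<in> Q" "x1 \<notin> Q"
  moreover have "S - (S - Q) = Q"
    using \<open>Q \<subseteq> S\<close> by blast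
  ultimately show "Q \<in> F2 \<or> S - Q \<in> F1"
    using cut[of "S - Q"] x1 by auto
qed (use family1 family2 finite_S x1 x2 x1_neq_x2 complement1 complement2 in simp_all)

lemma singleton_x1: "{x1} \<in> F1"
proof -
  have "S - {x1} \<notin> F2"
    using complement_singleton_unique[OF family2 finite_S x1 x2 _ complement2] x1_neq_x2 by blast
  then show ?thesis
    using cut[of "{x1}"] x1 x1_neq_x2 by auto
qed

lemma singleton_or_pair_complement:
  assumes "s \<in> S" and "s \<noteq> x2"
  shows "{s} \<in> F1 \<or> S - {x1, s} \<in> F2"
proof -
  have "{x1, s} \<in> F1 \<or> S - {x1, s} \<in> F2"
    using cut[of "{x1, s}"] assms x1 x1_neq_x2 by auto
  moreover have "{s} \<in> F1" if "{x1, s} \<in> F1"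
  proof (cases "s = x1")
    case False
    then have "{x1, s} - {s} \<in> F1"
      using singleton_x1 by (simp add: insert_Diff_if)
    then have "{x1, s} - {x1} \<in> F1"
      using family_exchange[OF family1 finite_S that, of s x1] by simp
    then show ?thesis
      using False by (simp add: insert_Diff_if)
  qed (use singleton_x1 in simp)
  ultimately show ?thesis
    by blast
qed

lemma pair_complement_unique:
  assumes "s \<in> S - {x1}" and "t \<in> S - {x1}" and "S - {x1, s} \<in> F2" and "S - {x1, t} \<in> F2"
  shows "s = t"
proof (rule ccontr)
  assume "s \<noteq> t"
  let ?Q = "S - {x1, s, t}"
  have "insert t ?Q = S - {x1, s}" and "insert s ?Q = S - {x1, t}"
    and "insert s (insert t ?Q) = S - {x1}"
    using assms(1,2) \<open>s \<noteq> t\<close> by auto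
  then have "S - {x1} \<in> F2"
    using family_insert_insert[OF family2 finite_S, of s ?Q t] assms(3,4) by simp
  then show False
    using complement_singleton_unique[OF family2 finite_S x1 x2 _ complement2] x1_neq_x2 by blast
qed

lemma singleton_failure_unique:
  assumes "s \<in> S - {x1, x2}" and "t \<in> S - {x1, x2}" and "{s} \<notin> F1" and "{t} \<notin> F1"
  shows "s = t"
  using pair_complement_unique singleton_or_pair_complement assms by blast

end

context separated_complement_singletons
begin

lemma mixed_singleton_failures:
  assumes s: "s \<in> S - {x1, x2}" and t: "t \<in> S - {x1, x2}" and "{s} \<notin> F1" and "{t} \<notin> F2"
  shows "s = t"
proof -
  have s_pair: "S - {x1, s} \<in> F2"
    using singleton_or_pair_complement assms(1,3) by blast
  have "insert e {} \<in> F1" if "e \<in> S - {x2, s}" for e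
  proof (cases "e = x1")
    case False
    show ?thesis
    proof (rule ccontr)
      assume "insert e {} \<notin> F1"
      then have "S - {x1, e} \<in> F2"
        using singleton_or_pair_complement that by auto
      then have "e = s"
        using pair_complement_unique[OF _ _ _ s_pair] that False assms(1) by blast
      then show False
        using that by simp
    qed
  qed (use singleton_x1 in simp)
  moreover have "S - {x2, s} \<noteq> {}"
    using x1 x1_neq_x2 assms(1) by blast
  ultimately have "{} \<union> (S - {x2, s}) \<in> F1"
    by (intro family_union_of_inserts[OF family1 finite_S]) (use finite_S in auto)
  moreover have "S - {x2, t} \<in> F1"
    using swapped.singleton_or_pair_complement assms(2,4) by blast
  ultimately show "s = t"
    using swapped.pair_complement_unique[of s t] assms(1,2) by auto
qed

lemma exists_single_exception:
  assumes "3 \<le> card S"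
  obtains y where "y \<in> S - {x1, x2}"
    and "\<And>t. t \<in> S - {x1, x2, y} \<Longrightarrow> {t} \<in> F1 \<and> {t} \<in> F2"
proof -
  have "card (S - {x1, x2}) \<noteq> 0"
    using assms x1 x2 x1_neq_x2 finite_S by (simp add: card_Diff_subset)
  then obtain y0 where y0: "y0 \<in> S - {x1, x2}"
    by (metis card.empty ex_in_conv)
  show ?thesis
  proof (cases "\<exists>s\<in>S - {x1, x2}. {s} \<notin> F1 \<or> {s} \<notin> F2")
    case True
    then obtain s where s: "s \<in> S - {x1, x2}" "{s} \<notin> F1 \<or> {s} \<notin> F2"
      by blast
    have "{t} \<in> F1 \<and> {t} \<in> F2" if "t \<in> S - {x1, x2, s}" for t
      using s that singleton_failure_unique[of s t] swapped.singleton_failure_unique[of s t]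
        mixed_singleton_failures[of s t] mixed_singleton_failures[of t s] by auto
    then show ?thesis
      using that s(1) by blast
  qed (use that y0 in blast)
qed

lemma consistency_certificate_holds:
  assumes "3 \<le> card S"
  shows "consistency_certificate S F1 F2"
proof -
  obtain y where y: "y \<in> S - {x1, x2}"
    and others: "\<And>t. t \<in> S - {x1, x2, y} \<Longrightarrow> {t} \<in> F1 \<and> {t} \<in> F2"
    using exists_single_exception[OF assms] by blast
  let ?A1 = "S - {x1}" and ?A2 = "S - {x2}" and ?B1 = "S - {x2, y}" and ?B2 = "S - {x1, y}"
  have "card {x1, x2, y} = 3"
    using y x1_neq_x2 by (auto simp: card_insert_if)
  then have "card (S - {x1, x2, y}) = card S - 3"
    using y x1 x2 finite_S by (simp add: card_Diff_subset)
  moreover have "?B1 \<inter> ?B2 = S - {x1, x2, y}"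
    by blast
  ultimately have "card (?B1 \<inter> ?B2) = card S - 3"
    by simp
  moreover have "card ?A1 = card S - 1" and "card ?A2 = card S - 1"
    and "card ?B1 = card S - 2" and "card ?B2 = card S - 2"
    using y x1 x2 finite_S by (auto simp: card_Diff_subset card_insert_if)
  moreover have "\<forall>b \<in> ?B1. {b} \<in> F1" and "\<forall>b \<in> ?B2. {b} \<in> F2"
    using others singleton_x1 swapped.singleton_x1 by auto
  moreover have "?A1 \<noteq> ?A2"
    using x1 x1_neq_x2 by blast
  moreover have "?B1 \<inter> ?A1 = ?B1 \<inter> ?B2" and "?B2 \<inter> ?A2 = ?B1 \<inter> ?B2"
    and "?B1 \<inter> ?B2 \<subseteq> ?A1 \<inter> ?A2" and "?B1 \<subseteq> S" and "?B2 \<subseteq> S"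
    by blast+
  ultimately show ?thesis
    unfolding consistency_certificate_def using complement1 complement2 by blast
qed

end

section \<open>A common complement singleton\<close>

lemma pair_complement_meets_both:
  assumes "finite V" and "card V = 4" and "P \<subseteq> V" and "card P = 2" and "R \<subseteq> V" and "card R = 2"
    and "P \<noteq> R" and "P \<noteq> V - R"
  shows "\<exists>\<rho>\<in>R. \<exists>\<omega>\<in>V - R. V - P = {\<rho>, \<omega>}"
proof -
  have "finite P" and "finite R"
    using assms(1,3,5) finite_subset by auto
  then have "card (V - P) = 2" and "card (V - R) = 2"
    using assms by (simp_all add: card_Diff_subset)
  have "(V - P) \<inter> R \<noteq> {}"
  proof
    assume "(V - P) \<inter> R = {}"
    then have "V - P \<subseteq> V - R"
      by blast
    then have "V - P = V - R"
      using card_subset_eq[of "V - R" "V - P"] assms(1) \<open>card (V - P) = 2\<close> \<open>card (V - R) = 2\<close>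
      by simp
    then show False
      using assms(3,5,7) by blast
  qed
  then obtain \<rho> where \<rho>: "\<rho> \<in> V - P" "\<rho> \<in> R"
    by blast
  have "(V - P) - R \<noteq> {}"
  proof
    assume "(V - P) - R = {}"
    then have "V - P \<subseteq> R"
      by blast
    then have "V - P = R"
      using card_subset_eq[of R "V - P"] \<open>finite R\<close> \<open>card (V - P) = 2\<close> assms(6) by simp
    then show False
      using assms(3,8) by blast
  qed
  then obtain \<omega> where \<omega>: "\<omega> \<in> V - P" "\<omega> \<notin> R"
    by blast
  have "\<rho> \<noteq> \<omega>"
    using \<rho> \<omega> by blast
  then have "card {\<rho>, \<omega>} = 2"
    by simp
  moreover have "{\<rho>, \<omega>} \<subseteq> V - P"
    using \<rho> \<omega> by blast
  ultimately have "{\<rho>, \<omega>} = V - P"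
    using card_subset_eq[of "V - P" "{\<rho>, \<omega>}"] assms(1) \<open>card (V - P) = 2\<close> by simp
  then show ?thesis
    using \<rho> \<omega> by blast
qed

lemma exists_pair_mixed_for_both:
  assumes "finite V" and "card V = 4" and "R \<subseteq> V" and "card R = 2" and "R' \<subseteq> V" and "card R' = 2"
  shows "\<exists>r\<in>R. \<exists>w\<in>V - R. \<exists>\<rho>\<in>R'. \<exists>\<omega>\<in>V - R'. V - {r, w} = {\<rho>, \<omega>}"
proof -
  have "finite R"
    using assms(1,3) finite_subset by auto
  then have "card (V - R) = 2"
    using assms by (simp add: card_Diff_subset)
  then obtain w1 w2 where W: "V - R = {w1, w2}" "w1 \<noteq> w2"
    by (meson card_2_iff)
  obtain r where r: "r \<in> R"
    using assms(4) by (metis card.empty ex_in_conv zero_neq_numeral)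
  have pairs: "{r, w} \<subseteq> V" "card {r, w} = 2" if "w \<in> V - R" for w
  proof -
    have "r \<noteq> w"
      using that r by blast
    then show "{r, w} \<subseteq> V" "card {r, w} = 2"
      using that r assms(3) by auto
  qed
  have "\<exists>w\<in>V - R. {r, w} \<noteq> R' \<and> {r, w} \<noteq> V - R'"
  proof (rule ccontr)
    assume "\<not> ?thesis"
    then have "{r, w1} = R' \<or> {r, w1} = V - R'" and "{r, w2} = R' \<or> {r, w2} = V - R'"
      using W by auto
    then show False
      using W r by (metis Diff_iff doubleton_eq_iff insertI1)
  qed
  then obtain w where "w \<in> V - R" and "{r, w} \<noteq> R'" and "{r, w} \<noteq> V - R'"
    by blast
  then show ?thesis
    using pair_complement_meets_both[OF assms(1,2) pairs assms(5,6)] r by blast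
qed

locale common_complement_singleton =
  fixes S :: "'a set" and F1 F2 :: "'a set set" and x :: 'a
  assumes pair: "S_pair S F1 F2" and finite_S: "finite S" and card_S: "3 \<le> card S"
    and x: "x \<in> S" and complement1: "S - {x} \<in> F1" and complement2: "S - {x} \<in> F2"
    \<comment> \<open>consistency at the consecutive cuts \<open>P\<close> and \<open>insert x P\<close> of an ordering\<close>
    and split: "\<And>P D. P \<union> D = S - {x} \<Longrightarrow> P \<inter> D = {} \<Longrightarrow>
      P \<in> F1 \<or> insert x P \<in> F1 \<or> D \<in> F2 \<or> insert x D \<in> F2"
begin

sublocale swapped: common_complement_singleton S F2 F1 x
proof
  fix P D assume "P \<union> D = S - {x}" "P \<inter> D = {}"
  then show "P \<in> F2 \<or> insert x P \<in> F2 \<or> D \<in> F1 \<or> insert x D \<in> F1"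
    using split[of D P] by blast
qed (use S_pair_swap[OF pair] finite_S card_S x complement1 complement2 in simp_all)

lemma family1: "S_family S F1"
  using S_pair_families(1)[OF pair] .

lemma family2: "S_family S F2"
  using S_pair_families(2)[OF pair] .

lemma card_V: "card (S - {x}) = card S - 1"
  using x finite_S by simp

lemma complement_singleton_eq_x: "u \<in> S \<Longrightarrow> S - {u} \<in> F1 \<Longrightarrow> u = x"
  using complement_singleton_unique[OF family1 finite_S _ x _ complement1] by blast

text \<open>(S4) pairs level \<open>a\<close> of \<open>F1\<close> with level \<open>card S - a\<close> of \<open>F2\<close>; through \<open>split\<close>,
  the gap just below level \<open>a\<close> in \<open>F1\<close> covers level \<open>card S - a\<close> in \<open>F2\<close>.\<close>

lemma minimal_level_impossible:
  assumes "2 \<le> a" and "a \<le> card S - 2"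
    and level: "all_card_in F1 (S - {x}) a" and below: "\<not> all_card_in F1 (S - {x}) (a - 1)"
  shows False
proof -
  let ?V = "S - {x}" and ?d = "card S - a"
  have "?V \<subseteq> S" and "finite ?V"
    using finite_S by auto
  have level': "all_card_in F1 ?V (Suc (a - 1))"
    using level assms(1) by simp
  have no_low: "P \<notin> F1 \<and> insert x P \<notin> F1" if "P \<subseteq> ?V" and "card P = a - 1" for P
    using all_card_in_down[OF family1 finite_S \<open>?V \<subseteq> S\<close> level' that] below
      insert_notin_family_below_full[OF family1 finite_S x level' _ _ that] assms(1,2) card_V card_S
    by auto
  have covered: "\<forall>D. D \<subseteq> ?V \<and> card D = ?d \<longrightarrow> D \<in> F2 \<or> insert x D \<in> F2"
  proof (intro allI impI)
    fix D assume D: "D \<subseteq> ?V \<and> card D = ?d"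
    have "card (?V - D) = a - 1"
      using card_Diff_subset[of D ?V] D finite_subset[OF _ \<open>finite ?V\<close>] card_V assms(2) by auto
    then show "D \<in> F2 \<or> insert x D \<in> F2"
      using split[of "?V - D" D] no_low[of "?V - D"] D by auto
  qed
  have upper: "all_card_in F2 ?V (Suc ?d)"
    by (rule all_card_in_if_covered[OF family2 finite_S _ covered]) (use assms(2) card_S in linarith)
  have not_level: "\<not> all_card_in F2 ?V ?d"
    using S_pair_S4[OF pair _ _ x level] assms(1,2) by simp
  have "?d \<le> card ?V"
    using card_V assms(1) by simp
  then obtain D0 where D0: "D0 \<subseteq> ?V" "card D0 = ?d"
    by (rule obtain_subset_with_card_n)
  then have "D0 \<in> F2 \<or> insert x D0 \<in> F2"
    using covered by blast
  then show False
  proof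
    assume "D0 \<in> F2"
    then show False
      using all_card_in_down[OF family2 finite_S \<open>?V \<subseteq> S\<close> upper D0] not_level by blast
  next
    assume "insert x D0 \<in> F2"
    moreover have "insert x D0 \<notin> F2"
      by (rule insert_notin_family_below_full[OF family2 finite_S x upper _ _ D0])
        (use assms(1,2) card_V card_S in auto)
    ultimately show False
      by simp
  qed
qed

lemma no_full_level_below_top: "\<not> all_card_in F1 (S - {x}) (card S - 2)"
proof
  assume full: "all_card_in F1 (S - {x}) (card S - 2)"
  define a where "a = (LEAST k. 1 \<le> k \<and> all_card_in F1 (S - {x}) k)"
  have a: "1 \<le> a \<and> all_card_in F1 (S - {x}) a"
    unfolding a_def by (rule LeastI[of _ "card S - 2"]) (use full card_S in simp)
  have "a \<le> card S - 2"
    unfolding a_def by (rule Least_le) (use full card_S in simp)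
  have "a \<noteq> 1"
  proof
    assume "a = 1"
    then have "\<not> all_card_in F2 (S - {x}) (card S - 1)"
      using S_pair_S4[OF pair _ _ x] a card_S by simp
    then show False
      using all_card_in_card[of "S - {x}" F2] finite_S complement2 card_V by simp
  qed
  have "\<not> all_card_in F1 (S - {x}) (a - 1)"
  proof
    assume "all_card_in F1 (S - {x}) (a - 1)"
    moreover have "a - 1 < a" and "1 \<le> a - 1"
      using a \<open>a \<noteq> 1\<close> by auto
    ultimately show False
      using not_less_Least[of "a - 1" "\<lambda>k. 1 \<le> k \<and> all_card_in F1 (S - {x}) k"]
      unfolding a_def by blast
  qed
  then show False
    using minimal_level_impossible[of a] a \<open>a \<noteq> 1\<close> \<open>a \<le> card S - 2\<close> by simp
qed

lemma no_set_below_top: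
  assumes "P \<subseteq> S - {x}" and "card P = card S - 2"
  shows "P \<notin> F1"
proof
  assume "P \<in> F1"
  have "Suc (card S - 2) = card (S - {x})"
    using card_V card_S by simp
  then have "all_card_in F1 (S - {x}) (Suc (card S - 2))"
    using all_card_in_card[of "S - {x}" F1] finite_S complement1 by simp
  then show False
    using all_card_in_down[OF family1 finite_S _ _ assms \<open>P \<in> F1\<close>] no_full_level_below_top by blast
qed

end

context common_complement_singleton
begin

lemma singleton_or_with_x:
  assumes "u \<in> S - {x}"
  shows "{u} \<in> F1 \<or> {x, u} \<in> F1"
proof -
  have "S - {x} - {u} \<notin> F2"
    using swapped.no_set_below_top[of "S - {x} - {u}"] assms finite_S card_V by simp
  moreover have "insert x (S - {x} - {u}) \<notin> F2"
  proof -
    have "insert x (S - {x} - {u}) = S - {u}"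
      using assms x by blast
    then show ?thesis
      using swapped.complement_singleton_eq_x[of u] assms by auto
  qed
  ultimately show ?thesis
    using split[of "{u}" "S - {x} - {u}"] assms by auto
qed

lemma mixed_pair_notin:
  assumes "r \<in> S - {x}" and "{r} \<in> F1" and "w \<in> S - {x}" and "{w} \<notin> F1"
  shows "{r, w} \<notin> F1" and "insert x {r, w} \<notin> F1"
proof -
  have "r \<noteq> w"
    using assms(2,4) by auto
  show pair: "{r, w} \<notin> F1"
  proof
    assume "{r, w} \<in> F1"
    moreover have "{r, w} - {w} \<in> F1"
      using assms(2) \<open>r \<noteq> w\<close> by (simp add: insert_Diff_if)
    ultimately have "{r, w} - {r} \<in> F1"
      using family_exchange[OF family1 finite_S, of "{r, w}" w r] by simp
    then show False
      using assms(4) \<open>r \<noteq> w\<close> by (simp add: insert_Diff_if)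
  qed
  show "insert x {r, w} \<notin> F1"
  proof
    assume "insert x {r, w} \<in> F1"
    moreover have "{x, w} \<in> F1"
      using singleton_or_with_x assms(3,4) by blast
    moreover have "insert x {r, w} - {r} = {x, w}" and "insert x {r, w} - {x} = {r, w}"
      using assms(1,3) \<open>r \<noteq> w\<close> by auto
    ultimately have "{r, w} \<in> F1"
      using family_exchange[OF family1 finite_S, of "insert x {r, w}" r x] by simp
    then show False
      using pair by simp
  qed
qed

lemma pair_partners_card_le_2:
  assumes "a \<in> S - {x}" and "A \<subseteq> S - {x, a}"
    and pairs: "\<forall>b\<in>A. {a, b} \<notin> F1 \<and> insert x {a, b} \<notin> F1"
  shows "card A \<le> 2"
proof (rule card_le_2_if_covered_by_subsingletons)
  let ?V = "S - {x}"
  show "A \<subseteq> {b \<in> A. ?V - {a, b} \<in> F2} \<union> {b \<in> A. insert x (?V - {a, b}) \<in> F2}"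
  proof
    fix b assume "b \<in> A"
    then have "{a, b} \<union> (?V - {a, b}) = ?V"
      using assms(1,2) by blast
    then show "b \<in> {b \<in> A. ?V - {a, b} \<in> F2} \<union> {b \<in> A. insert x (?V - {a, b}) \<in> F2}"
      using split[of "{a, b}" "?V - {a, b}"] pairs \<open>b \<in> A\<close> by blast
  qed
  show "\<forall>b\<in>{b \<in> A. ?V - {a, b} \<in> F2}. \<forall>c\<in>{b \<in> A. ?V - {a, b} \<in> F2}. b = c"
  proof (intro ballI, rule ccontr)
    fix b c assume b: "b \<in> {b \<in> A. ?V - {a, b} \<in> F2}" and c: "c \<in> {b \<in> A. ?V - {a, b} \<in> F2}"
      and "b \<noteq> c"
    let ?Q = "?V - {a, b, c}"
    have "insert c ?Q = ?V - {a, b}" and "insert b ?Q = ?V - {a, c}"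
      and "insert b (insert c ?Q) = ?V - {a}"
      using b c \<open>b \<noteq> c\<close> assms(2) by auto
    then have "?V - {a} \<in> F2"
      using family_insert_insert[OF family2 finite_S, of b ?Q c] b c by simp
    moreover have "card (?V - {a}) = card S - 2"
      using assms(1) card_V by simp
    ultimately show False
      using swapped.no_set_below_top[of "?V - {a}"] by blast
  qed
  show "\<forall>b\<in>{b \<in> A. insert x (?V - {a, b}) \<in> F2}.
      \<forall>c\<in>{b \<in> A. insert x (?V - {a, b}) \<in> F2}. b = c"
  proof (intro ballI, rule ccontr)
    fix b c assume b: "b \<in> {b \<in> A. insert x (?V - {a, b}) \<in> F2}"
      and c: "c \<in> {b \<in> A. insert x (?V - {a, b}) \<in> F2}" and "b \<noteq> c"
    let ?Q = "insert x (?V - {a, b, c})"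
    have "insert c ?Q = insert x (?V - {a, b})" and "insert b ?Q = insert x (?V - {a, c})"
      and "insert b (insert c ?Q) = S - {a}" and "b \<notin> ?Q" and "c \<notin> ?Q"
      using b c \<open>b \<noteq> c\<close> assms(1,2) x by auto
    then have "S - {a} \<in> F2"
      using family_insert_insert[OF family2 finite_S, of b ?Q c] b c by simp
    then show False
      using swapped.complement_singleton_eq_x[of a] assms(1) by simp
  qed
qed

lemma some_singleton_notin:
  obtains w where "w \<in> S - {x}" and "{w} \<notin> F1"
proof (rule ccontr)
  assume "\<not> thesis"
  then have singletons: "\<forall>C. C \<subseteq> S - {x} \<and> card C = 1 \<longrightarrow> {} \<union> C \<in> F1"
    using that by (auto simp: card_1_singleton_iff)
  have "all_card_in F1 (S - {x}) (card S - 2)"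
    unfolding all_card_in_def
  proof (intro allI impI)
    fix Q assume "Q \<subseteq> S - {x} \<and> card Q = card S - 2"
    then have "{} \<union> Q \<in> F1"
      using family_lift[OF family1 finite_S _ _ _ _ singletons] card_S by simp
    then show "Q \<in> F1"
      by simp
  qed
  then show False
    using no_full_level_below_top by blast
qed

lemma some_singleton_in:
  obtains r where "r \<in> S - {x}" and "{r} \<in> F1"
proof (rule ccontr)
  assume "\<not> thesis"
  then have with_x: "\<forall>e\<in>S - {x}. insert e {x} \<in> F1"
    using that singleton_or_with_x by (metis insert_commute)
  obtain v where v: "v \<in> S - {x}" and "{v} \<notin> F1"
    using some_singleton_notin by blast
  have "card (S - {x} - {v}) \<noteq> 0"
    using v card_V card_S by simp
  then have "S - {x} - {v} \<noteq> {}"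
    by (metis card.empty)
  then have "{x} \<union> (S - {x} - {v}) \<in> F1"
    by (intro family_union_of_inserts[OF family1 finite_S]) (use finite_S with_x in auto)
  moreover have "{x} \<union> (S - {x} - {v}) = S - {v}"
    using v x by blast
  ultimately show False
    using complement_singleton_eq_x[of v] v by simp
qed

lemma singletons_card_le:
  "card {u \<in> S - {x}. {u} \<in> F1} + 2 \<le> card (S - {x})"
proof -
  let ?R = "{u \<in> S - {x}. {u} \<in> F1}"
  obtain r where r: "r \<in> ?R"
    using some_singleton_in by blast
  obtain w where w: "w \<in> S - {x}" "{w} \<notin> F1"
    using some_singleton_notin by blast
  then have "?R \<subseteq> S - {x} - {w}"
    by blast
  then have le: "card ?R \<le> card S - 2"
    using card_mono[of "S - {x} - {w}" ?R] finite_S w card_V by simp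
  have "{} \<union> ?R \<in> F1"
    by (intro family_union_of_inserts[OF family1 finite_S]) (use finite_S r in auto)
  then have "card ?R \<noteq> card S - 2"
    using no_set_below_top[of ?R] by auto
  with le show ?thesis
    using card_V card_S by linarith
qed

lemma non_singletons_card_le:
  "card {u \<in> S - {x}. {u} \<notin> F1} + 2 \<le> card (S - {x})"
proof -
  let ?W = "{u \<in> S - {x}. {u} \<notin> F1}"
  obtain r where r: "r \<in> S - {x}" "{r} \<in> F1"
    using some_singleton_in by blast
  obtain w where w: "w \<in> ?W"
    using some_singleton_notin by blast
  have "finite (S - {x} - {r})" and "?W \<subseteq> S - {x} - {r}"
    using finite_S r by auto
  moreover have "card (S - {x} - {r}) = card S - 2"
    using r card_V by simp
  ultimately have le: "card ?W \<le> card S - 2"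
    using card_mono by metis
  have "{x} \<union> ?W \<in> F1"
    by (intro family_union_of_inserts[OF family1 finite_S])
      (use finite_S w singleton_or_with_x in \<open>auto simp: insert_commute\<close>)
  have "card ?W \<noteq> card S - 2"
  proof
    assume "card ?W = card S - 2"
    then have "?W = S - {x} - {r}"
      using card_subset_eq[OF \<open>finite (S - {x} - {r})\<close> \<open>?W \<subseteq> S - {x} - {r}\<close>]
        \<open>card (S - {x} - {r}) = card S - 2\<close> by simp
    moreover have "{x} \<union> (S - {x} - {r}) = S - {r}"
      using r x by blast
    ultimately have "S - {r} \<in> F1"
      using \<open>{x} \<union> ?W \<in> F1\<close> by simp
    then show False
      using complement_singleton_eq_x[of r] r by simp
  qed
  then show ?thesis
    using le card_V card_S by linarith
qed

lemma singleton_classes_card: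
  shows "card (S - {x}) = 4" and "card {u \<in> S - {x}. {u} \<in> F1} = 2"
proof -
  let ?R = "{u \<in> S - {x}. {u} \<in> F1}" and ?W = "{u \<in> S - {x}. {u} \<notin> F1}"
  have "finite ?R" and "finite ?W" and "?R \<inter> ?W = {}"
    using finite_S by auto
  then have "card (?R \<union> ?W) = card ?R + card ?W"
    by (rule card_Un_disjoint)
  moreover have "?R \<union> ?W = S - {x}"
    by blast
  ultimately have sum: "card (S - {x}) = card ?R + card ?W"
    by simp
  obtain r where r: "r \<in> S - {x}" "{r} \<in> F1"
    using some_singleton_in by blast
  obtain w where w: "w \<in> S - {x}" "{w} \<notin> F1"
    using some_singleton_notin by blast
  have W_le: "card ?W \<le> 2"
    using pair_partners_card_le_2[of r ?W] r mixed_pair_notin[OF r] by blast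
  have "\<forall>b\<in>?R. {w, b} \<notin> F1 \<and> insert x {w, b} \<notin> F1"
    using mixed_pair_notin[OF _ _ w] by (simp add: insert_commute)
  then have R_le: "card ?R \<le> 2"
    using pair_partners_card_le_2[of w ?R] w by blast
  show "card (S - {x}) = 4" and "card ?R = 2"
    using sum W_le R_le singletons_card_le non_singletons_card_le by linarith+
qed

end

context common_complement_singleton
begin

text \<open>Each family contains exactly two of the four singletons of \<open>S - {x}\<close>; a pair that
  is mixed for \<open>F1\<close> and whose complement is mixed for \<open>F2\<close> violates \<open>split\<close>.\<close>

lemma absurd: False
proof -
  let ?V = "S - {x}"
  let ?R1 = "{u \<in> ?V. {u} \<in> F1}" and ?R2 = "{u \<in> ?V. {u} \<in> F2}"
  have "\<exists>r\<in>?R1. \<exists>w\<in>?V - ?R1. \<exists>\<rho>\<in>?R2. \<exists>\<omega>\<in>?V - ?R2. ?V - {r, w} = {\<rho>, \<omega>}"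
    by (rule exists_pair_mixed_for_both)
      (use finite_S singleton_classes_card swapped.singleton_classes_card in auto)
  then obtain r w \<rho> \<omega> where r: "r \<in> ?V" "{r} \<in> F1" and w: "w \<in> ?V" "{w} \<notin> F1"
    and \<rho>: "\<rho> \<in> ?V" "{\<rho>} \<in> F2" and \<omega>: "\<omega> \<in> ?V" "{\<omega>} \<notin> F2"
    and complement: "?V - {r, w} = {\<rho>, \<omega>}"
    by blast
  then have "{r, w} \<union> {\<rho>, \<omega>} = ?V" and "{r, w} \<inter> {\<rho>, \<omega>} = {}"
    by blast+
  then show False
    using split mixed_pair_notin[OF r w] swapped.mixed_pair_notin[OF \<rho> \<omega>] by blast
qed

end

lemma order_consistent_imp_certificate:
  assumes "S_pair S S1 S2" and "finite S" and "3 \<le> card S" and "order_consistent S S1 S2"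
  shows "consistency_certificate S S1 S2"
proof -
  note families = S_pair_families[OF assms(1)]
  obtain x1 where x1: "x1 \<in> S" "S - {x1} \<in> S1"
    using order_consistent_complement_singleton[OF families assms(2,4)] assms(3) by auto
  obtain x2 where x2: "x2 \<in> S" "S - {x2} \<in> S2"
    using order_consistent_complement_singleton[OF families(2,1) assms(2)
      order_consistent_swap[OF assms(4)]] assms(3) by auto
  show ?thesis
  proof (cases "x1 = x2")
    case True
    have "common_complement_singleton S S1 S2 x1"
      using assms(1-3) x1 x2 True order_consistent_step[OF families assms(2,4)]
      by unfold_locales auto
    then show ?thesis
      using common_complement_singleton.absurd by metis
  next
    case False
    have "separated_complement_singletons S S1 S2 x1 x2"
      using families assms(2) x1 x2 False order_consistent_cut_between[OF families assms(2,4)]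
      by unfold_locales auto
    then show ?thesis
      using assms(3) by (rule separated_complement_singletons.consistency_certificate_holds)
  qed
qed

lemma order_consistent_if_ends:
  assumes "finite S" and "2 \<le> card S"
    and ends: "\<And>s ys t. distinct (s # ys @ [t]) \<Longrightarrow> set (s # ys @ [t]) = S \<Longrightarrow>
      {s} \<in> F1 \<or> S - {t} \<in> F1 \<or> S - {s} \<in> F2 \<or> {t} \<in> F2"
  shows "order_consistent S F1 F2"
  unfolding order_consistent_def
proof (intro allI impI)
  fix xs :: "'a list" assume xs: "distinct xs \<and> set xs = S"
  then have "2 \<le> length xs"
    using assms(2) distinct_card by fastforce
  then obtain s zs where "xs = s # zs" and "1 \<le> length zs"
    using Suc_le_length_iff[of 1 xs] by auto
  moreover obtain ys t where "zs = ys @ [t]"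
    using \<open>1 \<le> length zs\<close> by (cases zs rule: rev_cases) auto
  ultimately have xs_eq: "xs = s # ys @ [t]"
    by simp
  then have "set (take 1 xs) = {s}" and "set (drop (2 - 1) xs) = S - {s}"
    and "set (take (length xs - 1) xs) = S - {t}" and "set (drop (length xs - 1) xs) = {t}"
    using xs by auto
  moreover have "{1, 2, length xs - 1, length xs} \<subseteq> {1..length xs}"
    using \<open>2 \<le> length xs\<close> by auto
  ultimately show "\<exists>i\<in>{1..length xs}. set (take i xs) \<in> F1 \<or> set (drop (i - 1) xs) \<in> F2"
    using ends[of s ys t] xs xs_eq by (metis insert_subset)
qed

lemma complement_singleton_of_card:
  assumes "finite S" and "A \<subseteq> S" and "card A = card S - 1" and "1 \<le> card S"
  obtains a where "a \<in> S" and "A = S - {a}"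
proof -
  have "finite A"
    using finite_subset[OF assms(2,1)] .
  then have "card (S - A) = 1"
    using card_Diff_subset[OF _ assms(2)] assms(3,4) by simp
  then obtain a where "S - A = {a}"
    by (rule card_1_singletonE)
  then show ?thesis
    using that assms(2) by blast
qed

lemma certificate_imp_order_consistent:
  assumes "finite S" and "3 \<le> card S" and "S1 \<subseteq> Pow S" and "S2 \<subseteq> Pow S"
    and "consistency_certificate S S1 S2"
  shows "order_consistent S S1 S2"
proof -
  obtain A1 A2 B1 B2 where A: "A1 \<in> S1" "A2 \<in> S2" "card A1 = card S - 1" "card A2 = card S - 1"
      "A1 \<noteq> A2"
    and B: "B1 \<subseteq> S" "B2 \<subseteq> S" "card B1 = card S - 2" "card B2 = card S - 2"
    and I: "B1 \<inter> A1 = B1 \<inter> B2" "B2 \<inter> A2 = B1 \<inter> B2" "B1 \<inter> B2 \<subseteq> A1 \<inter> A2"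
      "card (B1 \<inter> B2) = card S - 3"
    and singletons: "\<forall>b \<in> B1. {b} \<in> S1" "\<forall>b \<in> B2. {b} \<in> S2"
    using assms(5) unfolding consistency_certificate_def by blast
  obtain x1 where x1: "x1 \<in> S" "A1 = S - {x1}"
    using complement_singleton_of_card[OF assms(1) _ A(3)] A(1) assms(2,3) by auto
  obtain x2 where x2: "x2 \<in> S" "A2 = S - {x2}"
    using complement_singleton_of_card[OF assms(1) _ A(4)] A(2) assms(2,4) by auto
  have "x1 \<in> B1"
  proof (rule ccontr)
    assume "x1 \<notin> B1"
    then have "B1 \<inter> B2 = B1"
      using I(1) B(1) x1(2) by blast
    then show False
      using B(3) I(4) assms(2) by simp
  qed
  have "x2 \<in> B2"
  proof (rule ccontr)
    assume "x2 \<notin> B2"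
    then have "B1 \<inter> B2 = B2"
      using I(2) B(2) x2(2) by blast
    then show False
      using B(4) I(4) assms(2) by simp
  qed
  show ?thesis
  proof (rule order_consistent_if_ends[OF assms(1)])
    fix s ys t assume "distinct (s # ys @ [t])" and "set (s # ys @ [t]) = S"
    then have "s \<noteq> t" and "s \<in> S" and "t \<in> S"
      by auto
    show "{s} \<in> S1 \<or> S - {t} \<in> S1 \<or> S - {s} \<in> S2 \<or> {t} \<in> S2"
    proof (rule ccontr)
      assume "\<not> ?thesis"
      then have "s \<notin> B1" and "t \<notin> B2" and "t \<noteq> x1" and "s \<noteq> x2"
        using singletons A(1,2) x1(2) x2(2) by auto
      moreover have "x1 \<noteq> x2"
        using A(5) x1(2) x2(2) by blast
      ultimately have "card {x1, x2, s, t} = 4"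
        using \<open>x1 \<in> B1\<close> \<open>x2 \<in> B2\<close> \<open>s \<noteq> t\<close> by (auto simp: card_insert_if)
      moreover have "(B1 \<inter> B2) \<inter> {x1, x2, s, t} = {}"
        using I(3) x1(2) x2(2) \<open>s \<notin> B1\<close> \<open>t \<notin> B2\<close> by blast
      moreover have "finite (B1 \<inter> B2)"
        using finite_subset[OF B(1) assms(1)] by simp
      ultimately have "card ((B1 \<inter> B2) \<union> {x1, x2, s, t}) = card S + 1"
        using card_Un_disjoint[of "B1 \<inter> B2" "{x1, x2, s, t}"] I(4) assms(2) by simp
      moreover have "card ((B1 \<inter> B2) \<union> {x1, x2, s, t}) \<le> card S"
        by (rule card_mono[OF assms(1)]) (use B(1) x1(1) x2(1) \<open>s \<in> S\<close> \<open>t \<in> S\<close> in blast)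
      ultimately show False
        by simp
    qed
  qed (use assms(2) in simp)
qed

theorem theorem2:
  fixes S :: "'a set" and S1 S2 :: "'a set set"
  assumes "finite S" and "card S \<ge> 3" and "S_pair S S1 S2"
  shows "order_consistent S S1 S2 \<longleftrightarrow>
    (\<exists>A1 A2 B1 B2. A1 \<in> S1 \<and> A2 \<in> S2 \<and>
       card A1 = card S - 1 \<and> card A2 = card S - 1 \<and> A1 \<noteq> A2 \<and>
       B1 \<subseteq> S \<and> B2 \<subseteq> S \<and> card B1 = card S - 2 \<and> card B2 = card S - 2 \<and>
       B1 \<inter> A1 = B1 \<inter> B2 \<and> B2 \<inter> A2 = B1 \<inter> B2 \<and>
       B1 \<inter> B2 \<subseteq> A1 \<inter> A2 \<and> card (B1 \<inter> B2) = card S - 3 \<and>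
       (\<forall>b \<in> B1. {b} \<in> S1) \<and> (\<forall>b \<in> B2. {b} \<in> S2))"
proof -
  have "S1 \<subseteq> Pow S" and "S2 \<subseteq> Pow S"
    using family_subset[OF S_pair_families(1)[OF assms(3)] assms(1)]
      family_subset[OF S_pair_families(2)[OF assms(3)] assms(1)] by blast+
  then have "order_consistent S S1 S2 \<longleftrightarrow> consistency_certificate S S1 S2"
    using order_consistent_imp_certificate[OF assms(3,1,2)]
      certificate_imp_order_consistent[OF assms(1,2)] by blast
  then show ?thesis
    unfolding consistency_certificate_def .
qed

end
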